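(* Let $\hat{\mathcal{C}}$ be a reference frame, $K$ an intrinsic matrix and $C$ a corner matrix with associated unit vectors $a_0,\dots,a_3$ (defined in the context), and let $\delta\ge 0$. Let $\tilde{\mathcal{C}}$ be the frame with the same orientation as $\hat{\mathcal{C}}$ (i.e. ${}^{\hat{\mathcal{C}}}R_{\tilde{\mathcal{C}}}=I$) and with ${}^{\hat{\mathcal{C}}}t_{\tilde{\mathcal{C}}}=[0\ 0\ \tilde z]^T$. If $$\tilde z\ \ge\ \frac{\delta}{\min_{i\in\{0,1,2,3\}} a_{i,z}},$$ then $\mathcal{V}_{\tilde{\mathcal{C}}}(K,C)\subseteq\mathcal{V}_{\mathcal{F}}(K,C)$ for every frame $\mathcal{F}\in\mathcal{P}(\delta,0)$.
   Context: A reference frame is an origin in $\mathbb{R}^3$ with an orthonormal basis. ${}^{\mathcal{F}}R_{\mathcal{G}}$ is the rotation matrix whose columns are the basis vectors of $\mathcal{G}$ expressed in $\mathcal{F}$; ${}^{\mathcal{F}}t_{\mathcal{G}}$ is the vector from the origin of $\mathcal{F}$ to that of $\mathcal{G}$ in $\mathcal{F}$-coordinates; ${}^{\mathcal{F}}y$ is the coordinate vector of a point $y$ in $\mathcal{F}$; $v_z$ is the third component of $v$. $K\in\mathbb{R}^{3\times3}$ is an invertible upper triangular intrinsic matrix, $C=[c_0\ c_1\ c_2\ c_3]\in\mathbb{R}^{2\times4}$ a matrix of image corner points. Define $d_i=K^{-1}[c_i^T\ 1]^T$, $l_i=\operatorname{sign}(d_{i,z})d_i/\|d_i\|_2$, $a_i=-\frac{l_i\times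 l_{(i+1)\bmod4}}{\|l_i\times l_{(i+1)\bmod4}\|_2}$. Field of view of a camera at frame $\mathcal{G}$: $\mathcal{V}_{\mathcal{G}}(K,C)=\{y\in\mathbb{R}^3:({}^{\mathcal{G}}y)^Ta_i\ge0\ \forall i\}$. For $\delta,\epsilon\ge0$, $\mathcal{P}(\delta,\epsilon)$ is the set of frames $\mathcal{F}$ with $\|{}^{\mathcal{F}}t_{\hat{\mathcal{C}}}\|_2\le\delta$ and such that the rotation vector $\theta u$ of ${}^{\mathcal{F}}R_{\hat{\mathcal{C}}}$ satisfies $\|\theta u\|_2\le\epsilon$; thus $\mathcal{P}(\delta,0)$ consists of frames with the same orientation as $\hat{\mathcal{C}}$ whose origin is within distance $\delta$ of that of $\hat{\mathcal{C}}$. *)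

theory Defs
  imports "HOL-Analysis.Analysis"
begin

(* A reference frame, given by its pose w.r.t. a fixed world frame:
   (R, o) where the columns of R are the basis vectors of the frame and
   o is its origin, both expressed in world coordinates. *)
type_synonym frame = "(real^3^3) \<times> (real^3)"

definition is_frame :: "frame \<Rightarrow> bool" where
  "is_frame F \<longleftrightarrow> orthogonal_matrix (fst F) \<and> det (fst F) = 1"

definition coords :: "frame \<Rightarrow> real^3 \<Rightarrow> real^3" where
  "coords F y = transpose (fst F) *v (y - snd F)"

definition relR :: "frame \<Rightarrow> frame \<Rightarrow> real^3^3" where
  "relR F G = transpose (fst F) ** fst G"

definition relt :: "frame \<Rightarrow> frame \<Rightarrow> real^3" where
  "relt F G = transpose (fst F) *v (snd G - snd F)"

(* norm of the rotation vector theta*u of a rotation matrix R, theta in [0, pi] *)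
definition rot_angle :: "real^3^3 \<Rightarrow> real" where
  "rot_angle R = arccos ((trace R - 1) / 2)"

definition upper_triangular3 :: "real^3^3 \<Rightarrow> bool" where
  "upper_triangular3 K \<longleftrightarrow> K$2$1 = 0 \<and> K$3$1 = 0 \<and> K$3$2 = 0"

(* corner matrix C in R^{2x4}; c_i is its i-th column, i = 0..3 *)
definition corner :: "real^4^2 \<Rightarrow> nat \<Rightarrow> real^2" where
  "corner C i = (\<chi> j. C $ j $ (of_nat i :: 4))"

definition dvec :: "real^3^3 \<Rightarrow> real^4^2 \<Rightarrow> nat \<Rightarrow> real^3" where
  "dvec K C i = matrix_inv K *v vector [corner C i $ 1, corner C i $ 2, 1]"

definition lvec :: "real^3^3 \<Rightarrow> real^4^2 \<Rightarrow> nat \<Rightarrow> real^3" where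
  "lvec K C i = (sgn (dvec K C i $ 3) / norm (dvec K C i)) *\<^sub>R dvec K C i"

definition avec :: "real^3^3 \<Rightarrow> real^4^2 \<Rightarrow> nat \<Rightarrow> real^3" where
  "avec K C i =
     - ((1 / norm (cross3 (lvec K C i) (lvec K C ((i + 1) mod 4))))
         *\<^sub>R cross3 (lvec K C i) (lvec K C ((i + 1) mod 4)))"

definition FOV :: "frame \<Rightarrow> real^3^3 \<Rightarrow> real^4^2 \<Rightarrow> (real^3) set" where
  "FOV G K C = {y. \<forall>i<4. coords G y \<bullet> avec K C i \<ge> 0}"

definition Pset :: "frame \<Rightarrow> real \<Rightarrow> real \<Rightarrow> frame set" where
  "Pset Chat \<delta> \<epsilon> = {F. is_frame F \<and> norm (relt F Chat) \<le> \<delta>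
                          \<and> rot_angle (relR F Chat) \<le> \<epsilon>}"

end

theory Submission
  imports Defs
begin

text \<open>
  A rotation of angle 0 is the identity (the trace of a rotation lies in [-1, 3], so the junk values
  of arccos outside [-1, 1] do not interfere), hence every F in P(\<delta>, 0) has the orientation of
  Chat, and so does Ctil. Between frames of equal orientation the camera coordinates differ by the
  translation t = relt F Ctil, and the half-space condition for a_i is shifted by t \<bullet> a_i. Here
  t = relt F Chat + (0, 0, ztil); the first summand has norm at most \<delta> and a_i is a unit vector,
  while ztil a_i,z \<ge> \<delta> by the choice of ztil, so t \<bullet> a_i \<ge> 0 and every half-space of Ctil lies in
  the corresponding half-space of F.
\<close>

lemma orthogonal_matrix_diag_le_1:
  fixes R :: "real^'n^'n"
  assumes "orthogonal_matrix R"
  shows "R $ i $ i \<le> 1"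
proof -
  have "R $ i $ i \<le> norm (column i R)"
    using component_le_norm_cart[of "column i R" i] by (simp add: column_def)
  then show ?thesis
    using assms by (simp add: orthogonal_matrix_orthonormal_columns)
qed

lemma orthogonal_matrix_trace_le:
  fixes R :: "real^'n^'n"
  assumes "orthogonal_matrix R"
  shows "trace R \<le> CARD('n)"
  using sum_mono[of UNIV "\<lambda>i. R $ i $ i" "\<lambda>_. 1"] orthogonal_matrix_diag_le_1[OF assms]
  by (simp add: trace_def)

lemma orthogonal_matrix_trace_eq_card_imp_id:
  fixes R :: "real^'n^'n"
  assumes "orthogonal_matrix R" and "trace R = CARD('n)"
  shows "R = mat 1"
proof -
  have "(\<Sum>i\<in>UNIV. 1 - R $ i $ i) = 0"
    using assms(2) by (simp add: trace_def sum_subtractf)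
  then have diag: "R $ i $ i = 1" for i
    using sum_nonneg_eq_0_iff[of UNIV "\<lambda>i. 1 - R $ i $ i"] orthogonal_matrix_diag_le_1[OF assms(1)]
    by simp
  have "column i R = axis i 1" for i
    using norm_cauchy_schwarz_eq[of "column i R" "axis i 1"] assms(1) diag
    by (simp add: orthogonal_matrix_orthonormal_columns column_def inner_axis)
  then show ?thesis
    by (simp add: vec_eq_iff column_def axis_def mat_def)
qed

lemma rotation_matrix_diag_cofactors:
  fixes R :: "real^3^3"
  assumes "rotation_matrix R"
  shows "R$1$1 = R$2$2 * R$3$3 - R$3$2 * R$2$3"
    and "R$2$2 = R$3$3 * R$1$1 - R$1$3 * R$3$1"
    and "R$3$3 = R$1$1 * R$2$2 - R$2$1 * R$1$2"
proof -
  have "cross3 (R *v axis j 1) (R *v axis k 1) = R *v axis i 1"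
    if "cross3 (axis j 1) (axis k 1) = axis i 1" for i j k :: 3
    using cross_rotation_matrix[OF assms] that by metis
  from this[of 1 2 3] this[of 2 3 1] this[of 3 1 2]
  show "R$1$1 = R$2$2 * R$3$3 - R$3$2 * R$2$3"
    and "R$2$2 = R$3$3 * R$1$1 - R$1$3 * R$3$1"
    and "R$3$3 = R$1$1 * R$2$2 - R$2$1 * R$1$2"
    by (auto simp: cross3_simps cross3_def matrix_vector_mult_def sum_3 axis_def vec_eq_iff forall_3)
qed

lemma rotation_matrix_trace_ge:
  fixes R :: "real^3^3"
  assumes "rotation_matrix R"
  shows "trace R \<ge> -1"
proof -
  have orth: "orthogonal_matrix R"
    using assms by (simp add: rotation_matrix_def)
  have col: "(R$1$i)\<^sup>2 + (R$2$i)\<^sup>2 + (R$3$i)\<^sup>2 = 1" for i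
    using orth by (simp add: orthogonal_matrix_orthonormal_columns norm_eq_1 column_def
        inner_vec_def sum_3 power2_eq_square)
  have row: "(R$i$1)\<^sup>2 + (R$i$2)\<^sup>2 + (R$i$3)\<^sup>2 = 1" for i
    using orth by (simp add: orthogonal_matrix_orthonormal_rows norm_eq_1 row_def
        inner_vec_def sum_3 power2_eq_square)
  \<comment> \<open>sum of the identities (1 + trace R) (1 + R_ii - R_jj - R_kk) = (R_kj - R_jk)^2, (i, j, k) cyclic\<close>
  have "(1 + trace R) * (3 - trace R) = (R$3$2 - R$2$3)\<^sup>2 + (R$1$3 - R$3$1)\<^sup>2 + (R$2$1 - R$1$2)\<^sup>2"
    using rotation_matrix_diag_cofactors[OF assms] col[of 1] col[of 2] col[of 3] row[of 1] row[of 2] row[of 3]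
    unfolding trace_def sum_3 by algebra
  then have "0 \<le> (1 + trace R) * (3 - trace R)"
    by simp
  moreover have "trace R \<le> 3"
    using orthogonal_matrix_trace_le[OF orth] by simp
  ultimately show ?thesis
    by (cases "trace R = 3") (simp_all add: zero_le_mult_iff)
qed

lemma rotation_matrix_rot_angle_nonpos_imp_id:
  fixes R :: "real^3^3"
  assumes "rotation_matrix R" and "rot_angle R \<le> 0"
  shows "R = mat 1"
proof -
  define c where "c = (trace R - 1) / 2"
  have orth: "orthogonal_matrix R"
    using assms(1) by (simp add: rotation_matrix_def)
  have c_range: "-1 \<le> c" "c \<le> 1"
    using rotation_matrix_trace_ge[OF assms(1)] orthogonal_matrix_trace_le[OF orth]
    by (simp_all add: c_def)
  have "arccos c = 0"
    using arccos_lbound[OF c_range] assms(2) by (simp add: rot_angle_def c_def)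
  then have "c = 1"
    using cos_arccos[OF c_range] by simp
  then show ?thesis
    using orthogonal_matrix_trace_eq_card_imp_id[OF orth] by (simp add: c_def)
qed

lemma rotation_matrix_relR:
  assumes "is_frame F" and "is_frame G"
  shows "rotation_matrix (relR F G)"
  using assms unfolding is_frame_def relR_def rotation_matrix_def
  by (simp add: orthogonal_matrix_mul det_mul)

lemma relR_eq_id_imp_same_orientation:
  assumes "is_frame F" and "relR F G = mat 1"
  shows "fst G = fst F"
proof -
  have "fst F ** transpose (fst F) = mat 1"
    using assms(1) by (simp add: is_frame_def orthogonal_matrix_def)
  then have "fst G = fst F ** relR F G"
    by (simp add: relR_def matrix_mul_assoc)
  then show ?thesis
    using assms(2) by simp
qed

lemma Pset_0_same_orientation:
  assumes "is_frame Chat" and "F \<in> Pset Chat \<delta> 0"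
  shows "fst F = fst Chat"
proof -
  have "is_frame F" and "rot_angle (relR F Chat) \<le> 0"
    using assms(2) by (simp_all add: Pset_def)
  then have "relR F Chat = mat 1"
    using rotation_matrix_rot_angle_nonpos_imp_id rotation_matrix_relR assms(1) by blast
  then show ?thesis
    using relR_eq_id_imp_same_orientation \<open>is_frame F\<close> by metis
qed

lemma coords_same_orientation:
  assumes "fst F = fst G"
  shows "coords F y = coords G y + relt F G"
  using assms by (simp add: coords_def relt_def flip: vector_matrix_left_distrib)

lemma relt_same_orientation:
  assumes "fst F = fst G"
  shows "relt F H = relt F G + relt G H"
  using assms by (simp add: relt_def flip: vector_matrix_left_distrib)

lemma FOV_subset_FOV_translated:
  assumes "fst F = fst G" and "\<forall>i<4. relt F G \<bullet> avec K C i \<ge> 0"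
  shows "FOV G K C \<subseteq> FOV F K C"
  using assms by (auto simp: FOV_def coords_same_orientation[OF assms(1)] inner_add_left add_nonneg_nonneg)

lemma norm_avec_le_1: "norm (avec K C i) \<le> 1"
  by (cases "cross3 (lvec K C i) (lvec K C ((i + 1) mod 4)) = 0") (simp_all add: avec_def)

theorem theorem1:
  fixes Chat Ctil :: frame and K :: "real^3^3" and C :: "real^4^2"
    and \<delta> ztil :: real
  assumes "is_frame Chat"
    and "invertible K" and "upper_triangular3 K"
    and "\<forall>i<4. avec K C i $ 3 > 0"
    and "\<delta> \<ge> 0"
    and "is_frame Ctil"
    and "relR Chat Ctil = mat 1"
    and "relt Chat Ctil = vector [0, 0, ztil]"
    and "ztil \<ge> \<delta> / Min ((\<lambda>i. avec K C i $ 3) ` {0..<4})"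
  shows "\<forall>F \<in> Pset Chat \<delta> 0. FOV Ctil K C \<subseteq> FOV F K C"
proof
  fix F assume F: "F \<in> Pset Chat \<delta> 0"
  have F_orientation: "fst F = fst Chat"
    using Pset_0_same_orientation[OF assms(1) F] .
  define m where "m = Min ((\<lambda>i. avec K C i $ 3) ` {0..<4})"
  have "m \<in> (\<lambda>i. avec K C i $ 3) ` {0..<4}"
    unfolding m_def by (intro Min_in) auto
  then have m_pos: "m > 0"
    using assms(4) by auto
  have ztil_ge: "\<delta> / m \<le> ztil"
    using assms(9) by (simp add: m_def)
  have ztil_nonneg: "0 \<le> ztil"
    using ztil_ge divide_nonneg_pos[OF assms(5) m_pos] by linarith
  show "FOV Ctil K C \<subseteq> FOV F K C"
  proof (rule FOV_subset_FOV_translated)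
    show "fst F = fst Ctil"
      using F_orientation relR_eq_id_imp_same_orientation[OF assms(1,7)] by simp
    show "\<forall>i<4. relt F Ctil \<bullet> avec K C i \<ge> 0"
    proof (intro allI impI)
      fix i :: nat assume "i < 4"
      let ?a = "avec K C i"
      have "\<bar>relt F Chat \<bullet> ?a\<bar> \<le> norm (relt F Chat) * norm ?a"
        by (rule Cauchy_Schwarz_ineq2)
      also have "\<dots> \<le> \<delta> * 1"
        using F norm_avec_le_1[of K C i] assms(5) by (intro mult_mono) (auto simp: Pset_def)
      finally have "- \<delta> \<le> relt F Chat \<bullet> ?a"
        by simp
      moreover have "\<delta> \<le> relt Chat Ctil \<bullet> ?a"
      proof -
        have "m \<le> ?a $ 3"
          unfolding m_def using \<open>i < 4\<close> by (intro Min_le) auto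
        then have "\<delta> / m * m \<le> ztil * ?a $ 3"
          using ztil_ge ztil_nonneg m_pos by (intro mult_mono) auto
        then show ?thesis
          using m_pos by (simp add: assms(8) inner_vec_def sum_3)
      qed
      ultimately show "relt F Ctil \<bullet> ?a \<ge> 0"
        using relt_same_orientation[OF F_orientation, of Ctil] by (simp add: inner_add_left)
    qed
  qed
qed

end
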